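(* Let $r\ge2$, $n\ge1$. Let $\varphi$ be a block function on $W_{r,n}$ and write it (uniquely) as $\varphi=\sum_{k=0}^n\varphi_k\phi^n_k$ with $\varphi_k\in\mathbb{C}$. Then for $k=0,\dots,n$, $$\varphi_k=\frac{\langle\varphi,\chi^{\boldsymbol{\lambda}_k}\rangle}{\binom{n}{k}},\qquad \boldsymbol{\lambda}_k=((n-k);(1^k);\emptyset;\dots;\emptyset).$$
   Context: $W_{r,n}=\mathbb{Z}_r\wr\mathfrak{S}_n$ is the group of $r$-colored permutations $w=w(1)^{c_1}\cdots w(n)^{c_n}$ ($c_i\in\{0,\dots,r-1\}$), with product $(\sigma\times\boldsymbol{x})(\tau\times\boldsymbol{y})=\sigma\tau\times(\boldsymbol{x}+\sigma(\boldsymbol{y}))$, $\sigma(\boldsymbol y)=(y_{\sigma(1)},\dots,y_{\sigma(n)})$, addition mod $r$. $\ell_n(w)$ is the number of cycles of $w(1)\cdots w(n)$ whose color (sum mod $r$ of the colors $c_i$ of its entries) is $0$. A block function is a function $W_{r,n}\to\mathbb{C}$ depending on $w$ only through $\ell_n(w)$. Set $\chi^n_k(w)=(rk+1)^{\ell_n(w)}$ (this is the character of $W_{r,n}$ acting on $V^{\otimes n}$, $V$ of dimension $rk+1$ with $k+1$ basis vectors of color $0$ and $k$ of each color $c\ge1$, $\mathfrak S_n$ permuting factors and $s_0=1^12^0\cdots n^0$ acting by $\xi^{\text{color of first factor}}$, $\xi=e^{2\pi i/r}$). The Foulkes characters are $\phi^n_k=\sum_{j=0}^k(-1)^j\binom{n+1}{j}\chi^n_{k-j}$,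 $k=0,\dots,n$; they form a basis of the space of block functions. $\langle\cdot,\cdot\rangle$ is the usual inner product $\langle\alpha,\beta\rangle=\frac{1}{|W_{r,n}|}\sum_{w}\alpha(w)\overline{\beta(w)}$. For an $r$-multipartition $\boldsymbol\lambda=(\lambda^{(0)};\dots;\lambda^{(r-1)})$ with $n_c=|\lambda^{(c)}|$, $\chi^{\boldsymbol\lambda}$ is the character of the irreducible module $\mathrm{Ind}_{W_{r,n_0}\times\cdots\times W_{r,n_{r-1}}}^{W_{r,n}}\boxtimes_c(\gamma_c\otimes S^{\lambda^{(c)}})$, where $S^{\lambda^{(c)}}$ is the inflated Specht module of $\mathfrak S_{n_c}$ and $\gamma_c(\sigma\times\boldsymbol x)=\xi^{c\sum_j x_j}$. *)

theory Defs
  imports Complex_Main "HOL-Combinatorics.Combinatorics"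
begin

type_synonym colperm = "(nat \<Rightarrow> nat) \<times> (nat \<Rightarrow> nat)"

text \<open>The group W_{r,n}: pairs (sigma, x), sigma a permutation of positions 0..n-1,
  x the colour vector (colours in 0..r-1, zero outside the positions).\<close>
definition W :: "nat \<Rightarrow> nat \<Rightarrow> colperm set" where
  "W r n = {(\<sigma>, x). \<sigma> permutes {..<n} \<and> (\<forall>i. x i < r) \<and> (\<forall>i\<ge>n. x i = 0)}"

text \<open>Product (sigma x x)(tau x y) = sigma tau x (x + sigma(y)), sigma(y)_i = y_(sigma i);
  for this to be associative, sigma tau is "first sigma, then tau", i.e. tau o sigma.\<close>
definition wmult :: "nat \<Rightarrow> colperm \<Rightarrow> colperm \<Rightarrow> colperm" where
  "wmult r w v = (fst v \<circ> fst w, \<lambda>i. (snd w i + snd v (fst w i)) mod r)"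

text \<open>Number of cycles of colour 0.\<close>
definition ell :: "nat \<Rightarrow> nat \<Rightarrow> colperm \<Rightarrow> nat" where
  "ell r n w = card {C \<in> (\<lambda>i. {(fst w ^^ m) i | m. True}) ` {..<n}.
                      (\<Sum>j\<in>C. snd w j) mod r = 0}"

definition chi :: "nat \<Rightarrow> nat \<Rightarrow> nat \<Rightarrow> colperm \<Rightarrow> complex" where
  "chi r n k w = (of_nat (r * k + 1)) ^ ell r n w"

definition foulkes :: "nat \<Rightarrow> nat \<Rightarrow> nat \<Rightarrow> colperm \<Rightarrow> complex" where
  "foulkes r n k w = (\<Sum>j\<le>k. (-1) ^ j * of_nat (Suc n choose j) * chi r n (k - j) w)"

definition inner :: "nat \<Rightarrow> nat \<Rightarrow> (colperm \<Rightarrow> complex) \<Rightarrow> (colperm \<Rightarrow> complex) \<Rightarrow> complex" where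
  "inner r n \<alpha> \<beta> = (\<Sum>w\<in>W r n. \<alpha> w * cnj (\<beta> w)) / of_nat (card (W r n))"

text \<open>Young-type subgroup W_{r,n-k} x W_{r,k} (first block positions 0..n-k-1,
  second block positions n-k..n-1).\<close>
definition Hsub :: "nat \<Rightarrow> nat \<Rightarrow> nat \<Rightarrow> colperm set" where
  "Hsub r n k = {w \<in> W r n. fst w ` {..<n-k} \<subseteq> {..<n-k}}"

text \<open>Character of (gamma_0 (x) S^(n-k)) boxtimes (gamma_1 (x) S^(1^k)) on Hsub:
  trivial on the first block; sign times xi^(sum of colours) on the second block.\<close>
definition psi :: "nat \<Rightarrow> nat \<Rightarrow> nat \<Rightarrow> colperm \<Rightarrow> complex" where
  "psi r n k w = of_int (sign (\<lambda>i. if n - k \<le> i then fst w i else i))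
                 * cis (2 * pi / real r) ^ (\<Sum>i\<in>{n-k..<n}. snd w i)"

text \<open>chi^lambda_k, lambda_k = ((n-k);(1^k);empty;...;empty): the induced character
  Ind(g) = 1/|H| * sum over h in G with h g h^-1 = c in H of psi(c).\<close>
definition chi_lambda :: "nat \<Rightarrow> nat \<Rightarrow> nat \<Rightarrow> colperm \<Rightarrow> complex" where
  "chi_lambda r n k g = (\<Sum>h\<in>W r n. \<Sum>c\<in>Hsub r n k.
       if wmult r h g = wmult r c h then psi r n k c else 0) / of_nat (card (Hsub r n k))"

end

theory Submission
  imports Defs "HOL-Computational_Algebra.Formal_Power_Series" "HOL-Combinatorics.Orbits"
    "HOL-Number_Theory.Cong"
begin

text \<open>
  By Frobenius reciprocity, \<open>\<langle>\<chi>\<^sub>m, \<chi>\<^sup>\<lambda>\<^sup>k\<rangle>\<close> is the average, over the Young subgroup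
  \<open>H = W\<^sub>r\<^sub>,\<^sub>n\<^sub>-\<^sub>k \<times> W\<^sub>r\<^sub>,\<^sub>k\<close>, of \<open>\<chi>\<^sub>m\<close> times the conjugate of the inducing character.
  As the trace on \<open>V\<^sup>\<otimes>\<^sup>n\<close>, \<open>\<chi>\<^sub>m\<close> is a sum over the basis tensors fixed (up to a root of unity)
  by the permutation part. Averaging over the colour part of \<open>H\<close> keeps exactly the tensors whose
  colours are \<open>0\<close> on the first block and \<open>1\<close> on the second; averaging over the permutation part
  then counts maps constant on cycles, with the sign character on the second block, and gives
  \<open>(m + 1) \<cdots> (m + n - k) / (n - k)!\<close> times \<open>m (m - 1) \<cdots> (m - k + 1) / k!\<close>. So
  \<open>\<langle>\<chi>\<^sub>m, \<chi>\<^sup>\<lambda>\<^sup>k\<rangle> = C(m + n - k, n - k) C(m, k)\<close>, and a Vandermonde convolution turns the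
  definition of the Foulkes characters into \<open>\<langle>\<phi>\<^sub>j, \<chi>\<^sup>\<lambda>\<^sup>k\<rangle> = \<delta>\<^sub>j\<^sub>k C(n, k)\<close>.
\<close>

section \<open>Binomial identities\<close>

lemma choose_mult_choose_eq:
  assumes "k \<le> n" "k \<le> m"
  shows "(m + (n - k) choose (n - k)) * (m choose k) = (n choose k) * (m - k + n choose n)"
proof -
  define N where "N = m - k + n"
  have N: "m + (n - k) = N"
    using assms by (simp add: N_def)
  have a: "(N choose m) * (m choose k) = (N choose k) * ((N - k) choose (m - k))"
    by (rule choose_mult) (use assms in \<open>auto simp: N_def\<close>)
  have b: "(N choose n) * (n choose k) = (N choose k) * ((N - k) choose (n - k))"
    by (rule choose_mult) (use assms in \<open>auto simp: N_def\<close>)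
  have c: "N choose (n - k) = N choose m"
    using binomial_symmetric[of "n - k" N] assms by (simp add: N_def)
  have d: "(N - k) choose (m - k) = (N - k) choose (n - k)"
    using binomial_symmetric[of "m - k" "N - k"] assms by (simp add: N_def)
  show ?thesis
    unfolding N c a d b[symmetric] N_def[symmetric] by (rule mult.commute)
qed

text \<open>Coefficient of \<open>x ^ l\<close> in \<open>(1 - x) ^ (n + 1) * (1 - x) ^ -(n + 1) = 1\<close>.\<close>
lemma alternating_choose_convolution:
  "(\<Sum>i\<le>l. (-1) ^ i * of_nat (Suc n choose i) * of_nat (l - i + n choose n) :: 'a :: field_char_0)
     = (if l = 0 then 1 else 0)"
proof -
  have negated: "of_nat (l - i + n choose n) = (-1) ^ (l - i) * ((- of_nat n - 1 :: 'a) gchoose (l - i))"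
    for i
  proof -
    have "(of_nat (l - i + n choose n) :: 'a) = of_nat (l - i + n choose (l - i))"
      using binomial_symmetric[of "l - i" "l - i + n"] by simp
    also have "\<dots> = of_nat (l - i + n) gchoose (l - i)"
      by (rule binomial_gbinomial)
    also have "\<dots> = (-1) ^ (l - i) * ((of_nat (l - i) - of_nat (l - i + n) - 1) gchoose (l - i))"
      by (rule gbinomial_negated_upper)
    finally show ?thesis by simp
  qed
  have "(\<Sum>i\<le>l. (-1) ^ i * of_nat (Suc n choose i) * of_nat (l - i + n choose n) :: 'a)
      = (-1) ^ l * (\<Sum>i\<le>l. (of_nat (Suc n) gchoose i) * ((- of_nat n - 1) gchoose (l - i)))"
    unfolding sum_distrib_left
  proof (rule sum.cong[OF refl])
    fix i assume "i \<in> {..l}"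
    then have sign: "(-1 :: 'a) ^ i * (-1) ^ (l - i) = (-1) ^ l"
      by (simp flip: power_add)
    have "(-1) ^ i * of_nat (Suc n choose i) * of_nat (l - i + n choose n)
        = ((-1 :: 'a) ^ i * (-1) ^ (l - i)) * ((of_nat (Suc n) gchoose i) * ((- of_nat n - 1) gchoose (l - i)))"
      unfolding negated unfolding binomial_gbinomial by (simp only: mult_ac)
    then show "(-1) ^ i * of_nat (Suc n choose i) * of_nat (l - i + n choose n)
        = (-1 :: 'a) ^ l * ((of_nat (Suc n) gchoose i) * ((- of_nat n - 1) gchoose (l - i)))"
      unfolding sign .
  qed
  also have "\<dots> = (-1) ^ l * ((of_nat (Suc n) + (- of_nat n - 1)) gchoose l)"
    by (simp only: gbinomial_Vandermonde atLeast0AtMost[symmetric])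
  also have "\<dots> = (if l = 0 then 1 else 0)"
    by (cases l) simp_all
  finally show ?thesis .
qed

lemma alternating_choose_orthogonality:
  assumes "k \<le> n"
  shows "(\<Sum>i\<le>j. (-1) ^ i * of_nat (Suc n choose i) *
           (of_nat (j - i + (n - k) choose (n - k)) * of_nat (j - i choose k)) :: 'a :: field_char_0)
       = (if j = k then of_nat (n choose k) else 0)"
proof (cases "k \<le> j")
  case False
  then show ?thesis by (auto intro!: sum.neutral)
next
  case True
  define l where "l = j - k"
  have j: "j = k + l" using True by (simp add: l_def)
  have "(\<Sum>i\<le>j. (-1) ^ i * of_nat (Suc n choose i) *
           (of_nat (j - i + (n - k) choose (n - k)) * of_nat (j - i choose k)) :: 'a)
      = (\<Sum>i\<le>l. (-1) ^ i * of_nat (Suc n choose i) *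
           (of_nat (j - i + (n - k) choose (n - k)) * of_nat (j - i choose k)))"
    by (rule sum.mono_neutral_right) (auto simp: j)
  also have "\<dots> = (\<Sum>i\<le>l. of_nat (n choose k) *
                      ((-1) ^ i * of_nat (Suc n choose i) * of_nat (l - i + n choose n)))"
  proof (rule sum.cong[OF refl])
    fix i assume "i \<in> {..l}"
    then have "(j - i + (n - k) choose (n - k)) * (j - i choose k)
             = (n choose k) * (l - i + n choose n)"
      using choose_mult_choose_eq[of k n "j - i"] assms by (simp add: j)
    then have "of_nat (j - i + (n - k) choose (n - k)) * of_nat (j - i choose k)
             = (of_nat (n choose k) * of_nat (l - i + n choose n) :: 'a)"
      by (simp flip: of_nat_mult)
    then show "(-1) ^ i * of_nat (Suc n choose i) *
           (of_nat (j - i + (n - k) choose (n - k)) * of_nat (j - i choose k))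
        = of_nat (n choose k) * ((-1) ^ i * of_nat (Suc n choose i) * (of_nat (l - i + n choose n) :: 'a))"
      by (simp only: mult_ac)
  qed
  also have "\<dots> = (if j = k then of_nat (n choose k) else 0)"
    by (simp only: sum_distrib_left[symmetric] alternating_choose_convolution) (simp add: j)
  finally show ?thesis .
qed

lemma prod_rising_div_fact:
  "(\<Prod>t<p. of_nat (Suc m) + of_nat t :: 'a :: field_char_0) / fact p = of_nat (m + p choose p)"
proof -
  have "(of_nat (m + p choose p) :: 'a) = pochhammer (of_nat (m + p) - of_nat p + 1) p / fact p"
    by (simp only: binomial_gbinomial gbinomial_pochhammer')
  also have "of_nat (m + p) - of_nat p + 1 = (of_nat (Suc m) :: 'a)"
    by simp
  also have "pochhammer (of_nat (Suc m)) p = (\<Prod>t<p. of_nat (Suc m) + of_nat t :: 'a)"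
    by (simp only: pochhammer_prod atLeast0LessThan)
  finally show ?thesis ..
qed

lemma prod_falling_div_fact:
  "(\<Prod>t<k. of_nat m - of_nat t :: 'a :: field_char_0) / fact k = of_nat (m choose k)"
  by (simp add: binomial_gbinomial gbinomial_prod_rev atLeast0LessThan)

section \<open>Roots of unity\<close>

definition xi :: "nat \<Rightarrow> complex" where
  "xi r = cis (2 * pi / real r)"

lemma xi_power: "xi r ^ a = cis (2 * pi * real a / real r)"
  by (simp add: xi_def DeMoivre mult.commute)

lemma xi_power_r: "r > 0 \<Longrightarrow> xi r ^ r = 1"
  by (simp add: xi_power)

lemma xi_power_power_r:
  assumes "r > 0"
  shows "(xi r ^ a) ^ r = 1"
proof -
  have "(xi r ^ a) ^ r = (xi r ^ r) ^ a"
    by (simp only: mult.commute flip: power_mult)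
  then show ?thesis
    using xi_power_r[OF assms] by simp
qed

lemma xi_power_mod:
  assumes "r > 0"
  shows "xi r ^ a = xi r ^ (a mod r)"
proof -
  have "xi r ^ a = xi r ^ (r * (a div r) + a mod r)"
    by simp
  also have "\<dots> = (xi r ^ r) ^ (a div r) * xi r ^ (a mod r)"
    by (simp only: power_add power_mult)
  finally show ?thesis
    using xi_power_r[OF assms] by simp
qed

lemma xi_power_cong: "r > 0 \<Longrightarrow> [a = b] (mod r) \<Longrightarrow> xi r ^ a = xi r ^ b"
  by (metis cong_def xi_power_mod)

lemma xi_power_eq_1_iff:
  assumes "r > 0"
  shows "xi r ^ a = 1 \<longleftrightarrow> r dvd a"
proof -
  have inj: "inj_on (\<lambda>k. cis (2 * pi * real k / real r)) {..<r}"
    using bij_betw_roots_unity[OF assms] by (rule bij_betw_imp_inj_on)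
  have "xi r ^ (a mod r) = 1 \<longleftrightarrow> a mod r = 0"
  proof
    assume "xi r ^ (a mod r) = 1"
    then have "cis (2 * pi * real (a mod r) / real r) = cis (2 * pi * real 0 / real r)"
      by (simp add: xi_power)
    then show "a mod r = 0"
      by (rule inj_onD[OF inj]) (use assms in auto)
  qed simp
  then show ?thesis
    using xi_power_mod[OF assms, of a] by (simp add: dvd_eq_mod_eq_0)
qed

lemma cnj_xi_power:
  assumes "r > 0"
  shows "cnj (xi r ^ a) = xi r ^ ((r - 1) * a)"
proof -
  have "cnj (xi r ^ a) * xi r ^ a = 1"
    by (simp add: xi_power cis_cnj cis_mult)
  moreover have "xi r ^ ((r - 1) * a) * xi r ^ a = 1"
  proof -
    have "xi r ^ ((r - 1) * a) * xi r ^ a = xi r ^ ((r - 1) * a + a)"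
      by (simp only: power_add)
    also have "(r - 1) * a + a = r * a"
      using assms by (cases r) auto
    also have "xi r ^ (r * a) = (xi r ^ r) ^ a"
      by (simp only: power_mult)
    finally show ?thesis
      using xi_power_r[OF assms] by simp
  qed
  moreover have "xi r ^ a \<noteq> 0"
    by (simp add: xi_power)
  ultimately show ?thesis
    by (metis mult_cancel_right)
qed

lemma sum_powers_root_of_unity:
  fixes z :: "'a :: field"
  assumes "z ^ r = 1"
  shows "(\<Sum>c<r. z ^ c) = (if z = 1 then of_nat r else 0)"
  using assms by (simp add: geometric_sum)

lemma sum_powers_atMost_root_of_unity:
  fixes z :: "'a :: field"
  assumes "z ^ r = 1"
  shows "(\<Sum>b\<le>r * m. z ^ b) = (if z = 1 then of_nat (r * m) + 1 else 1)"
proof (cases "z = 1")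
  case False
  have "(\<Sum>b\<le>r * m. z ^ b) = (\<Sum>b<Suc (r * m). z ^ b)"
    by (simp only: lessThan_Suc_atMost)
  also have "\<dots> = (z ^ Suc (r * m) - 1) / (z - 1)"
    by (rule geometric_sum[OF False])
  also have "z ^ Suc (r * m) = z"
    using assms by (simp add: power_mult)
  finally show ?thesis
    using False by simp
qed simp

section \<open>Maps invariant under a permutation\<close>

definition invariant_maps :: "'a set \<Rightarrow> ('a \<Rightarrow> 'b set) \<Rightarrow> ('a \<Rightarrow> 'a) \<Rightarrow> ('a \<Rightarrow> 'b) set" where
  "invariant_maps A S \<rho> = {F \<in> Pi\<^sub>E A S. \<forall>i\<in>A. F (\<rho> i) = F i}"

lemma card_invariant_maps_insert_fixpoint:
  assumes "a \<notin> A" "q permutes A"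
  shows "card (invariant_maps (insert a A) (\<lambda>_. S) q) = card S * card (invariant_maps A (\<lambda>_. S) q)"
proof -
  have q: "q a = a" "\<And>i. i \<in> A \<Longrightarrow> q i \<in> A"
    using assms permutes_not_in permutes_in_image by fastforce+
  have "bij_betw (\<lambda>F. (F a, restrict F A))
          (invariant_maps (insert a A) (\<lambda>_. S) q) (S \<times> invariant_maps A (\<lambda>_. S) q)"
  proof (rule bij_betw_byWitness[where f' = "\<lambda>(y, g). g(a := y)"])
    show "\<forall>F\<in>invariant_maps (insert a A) (\<lambda>_. S) q. (\<lambda>(y, g). g(a := y)) (F a, restrict F A) = F"
      by (auto simp: invariant_maps_def fun_eq_iff PiE_def extensional_def)
    show "\<forall>x\<in>S \<times> invariant_maps A (\<lambda>_. S) q. (\<lambda>F. (F a, restrict F A)) ((\<lambda>(y, g). g(a := y)) x) = x"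
      using assms(1) by (auto simp: invariant_maps_def fun_eq_iff PiE_def extensional_def)
    show "(\<lambda>F. (F a, restrict F A)) ` invariant_maps (insert a A) (\<lambda>_. S) q \<subseteq> S \<times> invariant_maps A (\<lambda>_. S) q"
      using q by (auto simp: invariant_maps_def)
    show "(\<lambda>(y, g). g(a := y)) ` (S \<times> invariant_maps A (\<lambda>_. S) q) \<subseteq> invariant_maps (insert a A) (\<lambda>_. S) q"
      using q assms(1) by (auto simp: invariant_maps_def PiE_def extensional_def)
  qed
  then show ?thesis
    by (simp add: bij_betw_same_card card_cartesian_product)
qed

lemma card_invariant_maps_insert_cycle:
  assumes "a \<notin> A" "q permutes A" "b \<in> A"
  shows "card (invariant_maps (insert a A) (\<lambda>_. S) (transpose a b \<circ> q))
       = card (invariant_maps A (\<lambda>_. S) q)"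
proof -
  have q: "q a = a" "\<And>i. i \<in> A \<Longrightarrow> q i \<in> A"
    using assms permutes_not_in permutes_in_image by fastforce+
  have "bij_betw (\<lambda>F. restrict F A)
          (invariant_maps (insert a A) (\<lambda>_. S) (transpose a b \<circ> q)) (invariant_maps A (\<lambda>_. S) q)"
  proof (rule bij_betw_byWitness[where f' = "\<lambda>g. g(a := g b)"])
    show "\<forall>F\<in>invariant_maps (insert a A) (\<lambda>_. S) (transpose a b \<circ> q). (restrict F A)(a := restrict F A b) = F"
      using q assms by (auto simp: invariant_maps_def fun_eq_iff PiE_def extensional_def)
    show "\<forall>g\<in>invariant_maps A (\<lambda>_. S) q. restrict (g(a := g b)) A = g"
      using assms(1) by (auto simp: invariant_maps_def fun_eq_iff PiE_def extensional_def)
    show "(\<lambda>F. restrict F A) ` invariant_maps (insert a A) (\<lambda>_. S) (transpose a b \<circ> q)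
            \<subseteq> invariant_maps A (\<lambda>_. S) q"
      using q assms(1,3) by (auto simp: invariant_maps_def transpose_def split: if_splits)
    show "(\<lambda>g. g(a := g b)) ` invariant_maps A (\<lambda>_. S) q \<subseteq> invariant_maps (insert a A) (\<lambda>_. S) (transpose a b \<circ> q)"
      using q assms(1,3) by (auto simp: invariant_maps_def PiE_def extensional_def transpose_def)
  qed
  then show ?thesis
    by (simp add: bij_betw_same_card)
qed

lemma card_invariant_maps_insert:
  assumes "a \<notin> A" "q permutes A" "b \<in> insert a A"
  shows "card (invariant_maps (insert a A) (\<lambda>_. S) (transpose a b \<circ> q))
       = (if b = a then card S else 1) * card (invariant_maps A (\<lambda>_. S) q)"
  using assms card_invariant_maps_insert_fixpoint card_invariant_maps_insert_cycle by auto

lemma sign_transpose_compose: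
  assumes "q permutes A" "finite A"
  shows "sign (transpose a b \<circ> q) = (if b = a then 1 else -1) * sign q"
proof -
  have "permutation q"
    using assms permutation_permutes by blast
  then show ?thesis
    by (simp add: sign_compose permutation_swap_id sign_swap_id eq_commute[of a b])
qed

lemma sum_card_invariant_maps:
  assumes "finite A"
  shows "(\<Sum>\<rho> | \<rho> permutes A. of_nat (card (invariant_maps A (\<lambda>_. S) \<rho>)) :: 'a :: comm_ring_1)
       = (\<Prod>t<card A. of_nat (card S) + of_nat t)"
  using assms
proof (induction A rule: finite_induct)
  case empty
  then show ?case by (simp add: invariant_maps_def)
next
  case (insert a A)
  let ?c = "\<lambda>q. of_nat (card (invariant_maps A (\<lambda>_. S) q)) :: 'a"
  have "(\<Sum>\<rho> | \<rho> permutes insert a A. of_nat (card (invariant_maps (insert a A) (\<lambda>_. S) \<rho>)) :: 'a)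
      = (\<Sum>b\<in>insert a A. \<Sum>q | q permutes A. (if b = a then of_nat (card S) else 1) * ?c q)"
    unfolding sum_over_permutations_insert[OF insert.hyps]
    by (intro sum.cong refl) (simp add: card_invariant_maps_insert insert.hyps)
  also have "\<dots> = (\<Sum>b\<in>insert a A. if b = a then of_nat (card S) else 1) * (\<Sum>q | q permutes A. ?c q)"
    by (rule sum_product[symmetric])
  also have "(\<Sum>b\<in>insert a A. if b = a then of_nat (card S) else 1) = of_nat (card S) + (of_nat (card A) :: 'a)"
    using insert by (simp add: sum.If_cases Int_absorb2 Diff_eq[symmetric])
  finally show ?case
    using insert by (simp add: mult.commute)
qed

lemma sum_sign_card_invariant_maps:
  assumes "finite A"
  shows "(\<Sum>\<rho> | \<rho> permutes A. of_int (sign \<rho>) * of_nat (card (invariant_maps A (\<lambda>_. S) \<rho>)) :: 'a :: comm_ring_1)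
       = (\<Prod>t<card A. of_nat (card S) - of_nat t)"
  using assms
proof (induction A rule: finite_induct)
  case empty
  then show ?case by (simp add: invariant_maps_def sign_id)
next
  case (insert a A)
  let ?c = "\<lambda>q. of_int (sign q) * of_nat (card (invariant_maps A (\<lambda>_. S) q)) :: 'a"
  have "(\<Sum>\<rho> | \<rho> permutes insert a A.
          of_int (sign \<rho>) * of_nat (card (invariant_maps (insert a A) (\<lambda>_. S) \<rho>)) :: 'a)
      = (\<Sum>b\<in>insert a A. \<Sum>q | q permutes A. (if b = a then of_nat (card S) else - 1) * ?c q)"
    unfolding sum_over_permutations_insert[OF insert.hyps]
    by (intro sum.cong refl)
       (simp add: card_invariant_maps_insert sign_transpose_compose insert.hyps)
  also have "\<dots> = (\<Sum>b\<in>insert a A. if b = a then of_nat (card S) else - 1) * (\<Sum>q | q permutes A. ?c q)"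
    by (rule sum_product[symmetric])
  also have "(\<Sum>b\<in>insert a A. if b = a then of_nat (card S) else - 1) = of_nat (card S) - (of_nat (card A) :: 'a)"
    using insert by (simp add: sum.If_cases Int_absorb2 Diff_eq[symmetric])
  finally show ?case
    using insert by (simp add: mult.commute)
qed

lemma invariant_maps_subset_PiE: "invariant_maps A S \<rho> \<subseteq> Pi\<^sub>E A S"
  by (auto simp: invariant_maps_def)

lemma invariant_map_const_on_orbit:
  assumes "F \<in> invariant_maps A S \<sigma>" "\<sigma> permutes A" "i \<in> A" "j \<in> orbit \<sigma> i"
  shows "F j = F i"
  using assms(4)
proof induction
  case base
  then show ?case using assms(1,3) by (simp add: invariant_maps_def)
next
  case (step j)
  then have "j \<in> A" using permutes_orbit_subset[OF assms(2,3)] by blast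
  then show ?case using assms(1) step.IH by (simp add: invariant_maps_def)
qed

lemma bij_betw_orbit_maps_invariant_maps:
  assumes "\<sigma> permutes A" "finite A"
  shows "bij_betw (\<lambda>g. restrict (\<lambda>i. g (orbit \<sigma> i)) A)
           (orbit \<sigma> ` A \<rightarrow>\<^sub>E B) (invariant_maps A (\<lambda>_. B) \<sigma>)"
proof (rule bij_betw_byWitness[where f' = "\<lambda>F. restrict (\<lambda>C. the_elem (F ` C)) (orbit \<sigma> ` A)"])
  have perm: "permutation \<sigma>"
    using assms permutation_permutes by blast
  have image_orbit: "F ` orbit \<sigma> i = {F i}" if "F \<in> invariant_maps A (\<lambda>_. B) \<sigma>" "i \<in> A" for F i
    using invariant_map_const_on_orbit[OF that(1) assms(1) that(2)] permutation_self_in_orbit[OF perm]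
    by blast
  show "\<forall>g\<in>orbit \<sigma> ` A \<rightarrow>\<^sub>E B.
          restrict (\<lambda>C. the_elem (restrict (\<lambda>i. g (orbit \<sigma> i)) A ` C)) (orbit \<sigma> ` A) = g"
  proof
    fix g assume g: "g \<in> orbit \<sigma> ` A \<rightarrow>\<^sub>E B"
    have "restrict (\<lambda>i. g (orbit \<sigma> i)) A ` orbit \<sigma> i = {g (orbit \<sigma> i)}" if "i \<in> A" for i
    proof -
      have "restrict (\<lambda>i. g (orbit \<sigma> i)) A j = g (orbit \<sigma> i)" if "j \<in> orbit \<sigma> i" for j
        using permutes_orbit_subset[OF assms(1) \<open>i \<in> A\<close>] orbit_cyclic_eq3[OF cyclic_on_orbit'[OF perm] that]
          that by auto
      then have "restrict (\<lambda>i. g (orbit \<sigma> i)) A ` orbit \<sigma> i = (\<lambda>_. g (orbit \<sigma> i)) ` orbit \<sigma> i"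
        by (rule image_cong[OF refl])
      also have "\<dots> = {g (orbit \<sigma> i)}"
        by (rule image_constant[OF permutation_self_in_orbit[OF perm]])
      finally show ?thesis .
    qed
    then show "restrict (\<lambda>C. the_elem (restrict (\<lambda>i. g (orbit \<sigma> i)) A ` C)) (orbit \<sigma> ` A) = g"
      using g by (auto simp: fun_eq_iff PiE_def extensional_def)
  qed
  show "\<forall>F\<in>invariant_maps A (\<lambda>_. B) \<sigma>.
          restrict (\<lambda>i. restrict (\<lambda>C. the_elem (F ` C)) (orbit \<sigma> ` A) (orbit \<sigma> i)) A = F"
    using image_orbit by (auto simp: invariant_maps_def fun_eq_iff PiE_def extensional_def)
  show "(\<lambda>g. restrict (\<lambda>i. g (orbit \<sigma> i)) A) ` (orbit \<sigma> ` A \<rightarrow>\<^sub>E B) \<subseteq> invariant_maps A (\<lambda>_. B) \<sigma>"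
    using permutation_orbit_step[OF perm] permutes_in_image[OF assms(1)]
    by (auto simp: invariant_maps_def)
  show "(\<lambda>F. restrict (\<lambda>C. the_elem (F ` C)) (orbit \<sigma> ` A)) ` invariant_maps A (\<lambda>_. B) \<sigma>
          \<subseteq> orbit \<sigma> ` A \<rightarrow>\<^sub>E B"
    using image_orbit by (auto simp: invariant_maps_def)
qed

lemma card_invariant_maps_compose:
  assumes "A \<inter> B = {}" "\<rho>1 permutes A" "\<rho>2 permutes B"
  shows "card (invariant_maps (A \<union> B) S (\<rho>1 \<circ> \<rho>2))
       = card (invariant_maps A S \<rho>1) * card (invariant_maps B S \<rho>2)"
proof -
  have "\<rho>2 i = i" "\<rho>1 i \<in> A" if "i \<in> A" for i
    using that assms permutes_not_in permutes_in_image by fastforce+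
  moreover have "\<rho>1 i = i" "\<rho>2 i \<in> B" if "i \<in> B" for i
    using that assms permutes_not_in permutes_in_image by fastforce+
  ultimately have invariant_iff: "F \<in> invariant_maps (A \<union> B) S (\<rho>1 \<circ> \<rho>2) \<longleftrightarrow>
      F \<in> Pi\<^sub>E (A \<union> B) S \<and> restrict F A \<in> invariant_maps A S \<rho>1 \<and> restrict F B \<in> invariant_maps B S \<rho>2"
    for F
    by (auto simp: invariant_maps_def ball_Un)
  let ?X = "{F \<in> Pi\<^sub>E (A \<union> B) S. restrict F A \<in> invariant_maps A S \<rho>1 \<and> restrict F B \<in> invariant_maps B S \<rho>2}"
  let ?split = "\<lambda>F. (restrict F A, restrict F B)"
  have inj: "inj_on ?split ?X"
    by (auto simp: inj_on_def fun_eq_iff PiE_def extensional_def) (metis)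
  have image: "?split ` ?X = invariant_maps A S \<rho>1 \<times> invariant_maps B S \<rho>2"
  proof
    show "?split ` ?X \<subseteq> invariant_maps A S \<rho>1 \<times> invariant_maps B S \<rho>2"
      by blast
    show "invariant_maps A S \<rho>1 \<times> invariant_maps B S \<rho>2 \<subseteq> ?split ` ?X"
    proof clarify
      fix F1 F2 assume F1: "F1 \<in> invariant_maps A S \<rho>1" and F2: "F2 \<in> invariant_maps B S \<rho>2"
      define F where "F i = (if i \<in> A then F1 i else F2 i)" for i
      have "F1 \<in> Pi\<^sub>E A S" "F2 \<in> Pi\<^sub>E B S"
        using F1 F2 invariant_maps_subset_PiE by blast+
      then have "restrict F A = F1" "restrict F B = F2" "F \<in> Pi\<^sub>E (A \<union> B) S"
        using assms(1) by (auto simp: F_def fun_eq_iff PiE_def extensional_def)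
      then show "(F1, F2) \<in> ?split ` ?X"
        using F1 F2 by (intro image_eqI[where x = F]) simp_all
    qed
  qed
  have "card (invariant_maps (A \<union> B) S (\<rho>1 \<circ> \<rho>2)) = card ?X"
    by (intro arg_cong[where f = card] set_eqI) (simp only: invariant_iff mem_Collect_eq)
  also have "\<dots> = card (?split ` ?X)"
    by (rule card_image[OF inj, symmetric])
  also have "\<dots> = card (invariant_maps A S \<rho>1) * card (invariant_maps B S \<rho>2)"
    unfolding image by (rule card_cartesian_product)
  finally show ?thesis .
qed

lemma permutes_Un_images:
  assumes "finite A" "A \<inter> B = {}" "\<rho> permutes (A \<union> B)" "\<rho> ` A \<subseteq> A"
  shows "\<rho> ` A = A" "\<rho> ` B = B"
proof -
  have inj: "inj \<rho>"
    using permutes_inj[OF assms(3)] .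
  show A: "\<rho> ` A = A"
    using endo_inj_surj[OF assms(1,4)] inj_on_subset[OF inj] by blast
  have B: "(A \<union> B) - A = B"
    using assms(2) by blast
  have "\<rho> ` ((A \<union> B) - A) = (A \<union> B) - A"
    by (simp only: image_set_diff[OF inj] permutes_image[OF assms(3)] A)
  then show "\<rho> ` B = B"
    unfolding B .
qed

lemma bij_betw_compose_permutes:
  assumes "finite A" "A \<inter> B = {}"
  shows "bij_betw (\<lambda>(\<rho>1, \<rho>2). \<rho>1 \<circ> \<rho>2) ({\<rho>. \<rho> permutes A} \<times> {\<rho>. \<rho> permutes B})
           {\<rho>. \<rho> permutes (A \<union> B) \<and> \<rho> ` A \<subseteq> A}"
proof (rule bij_betw_byWitness[where f' = "\<lambda>\<rho>. (restrict_id \<rho> A, restrict_id \<rho> B)"])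
  note images = permutes_Un_images[OF assms]
  show "\<forall>p\<in>{\<rho>. \<rho> permutes A} \<times> {\<rho>. \<rho> permutes B}.
          (restrict_id ((\<lambda>(\<rho>1, \<rho>2). \<rho>1 \<circ> \<rho>2) p) A, restrict_id ((\<lambda>(\<rho>1, \<rho>2). \<rho>1 \<circ> \<rho>2) p) B) = p"
    using assms(2) permutes_not_in permutes_in_image
    by (fastforce simp: fun_eq_iff restrict_id_def)
  show "\<forall>\<rho>\<in>{\<rho>. \<rho> permutes (A \<union> B) \<and> \<rho> ` A \<subseteq> A}.
          (\<lambda>(\<rho>1, \<rho>2). \<rho>1 \<circ> \<rho>2) (restrict_id \<rho> A, restrict_id \<rho> B) = \<rho>"
    using assms(2) images permutes_not_in by (fastforce simp: fun_eq_iff restrict_id_def)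
  show "(\<lambda>(\<rho>1, \<rho>2). \<rho>1 \<circ> \<rho>2) ` ({\<rho>. \<rho> permutes A} \<times> {\<rho>. \<rho> permutes B})
          \<subseteq> {\<rho>. \<rho> permutes (A \<union> B) \<and> \<rho> ` A \<subseteq> A}"
  proof clarify
    fix \<rho>1 \<rho>2 assume \<rho>1: "\<rho>1 permutes A" and \<rho>2: "\<rho>2 permutes B"
    have fixes_A: "\<rho>2 i = i" if "i \<in> A" for i
      using that assms(2) permutes_not_in[OF \<rho>2] by blast
    have "\<rho>1 permutes (A \<union> B)" "\<rho>2 permutes (A \<union> B)"
      by (rule permutes_subset[OF \<rho>1], blast, rule permutes_subset[OF \<rho>2], blast)
    then have "\<rho>1 \<circ> \<rho>2 permutes (A \<union> B)"
      by (rule permutes_compose[rotated])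
    moreover have "(\<rho>1 \<circ> \<rho>2) ` A \<subseteq> A"
      using fixes_A permutes_in_image[OF \<rho>1] by auto
    ultimately show "\<rho>1 \<circ> \<rho>2 permutes (A \<union> B) \<and> (\<rho>1 \<circ> \<rho>2) ` A \<subseteq> A" ..
  qed
  show "(\<lambda>\<rho>. (restrict_id \<rho> A, restrict_id \<rho> B)) ` {\<rho>. \<rho> permutes (A \<union> B) \<and> \<rho> ` A \<subseteq> A}
          \<subseteq> {\<rho>. \<rho> permutes A} \<times> {\<rho>. \<rho> permutes B}"
  proof
    fix x assume "x \<in> (\<lambda>\<rho>. (restrict_id \<rho> A, restrict_id \<rho> B)) ` {\<rho>. \<rho> permutes (A \<union> B) \<and> \<rho> ` A \<subseteq> A}"
    then obtain \<rho> where \<rho>: "\<rho> permutes (A \<union> B)" "\<rho> ` A \<subseteq> A"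
      and x: "x = (restrict_id \<rho> A, restrict_id \<rho> B)"
      by blast
    have "inj_on \<rho> A" "inj_on \<rho> B"
      using permutes_inj[OF \<rho>(1)] inj_on_subset by blast+
    then have "bij_betw \<rho> A A" "bij_betw \<rho> B B"
      using images[OF \<rho>] by (simp_all add: bij_betw_def)
    then show "x \<in> {\<rho>. \<rho> permutes A} \<times> {\<rho>. \<rho> permutes B}"
      by (simp add: x permutes_restrict_id)
  qed
qed

section \<open>The group \<open>W\<^sub>r\<^sub>,\<^sub>n\<close>\<close>

definition colour_vectors :: "nat \<Rightarrow> nat \<Rightarrow> (nat \<Rightarrow> nat) set" where
  "colour_vectors r n = {x. (\<forall>i. x i < r) \<and> (\<forall>i\<ge>n. x i = 0)}"

lemma W_eq: "W r n = {\<sigma>. \<sigma> permutes {..<n}} \<times> colour_vectors r n"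
  by (auto simp: W_def colour_vectors_def)

lemma bij_betw_restrict_colour_vectors:
  assumes "r > 0"
  shows "bij_betw (\<lambda>x. restrict x {..<n}) (colour_vectors r n) ({..<n} \<rightarrow>\<^sub>E {..<r})"
  using assms
  by (intro bij_betw_byWitness[where f' = "\<lambda>F i. if i < n then F i else 0"])
     (auto simp: colour_vectors_def fun_eq_iff PiE_def extensional_def)

lemma card_colour_vectors: "r > 0 \<Longrightarrow> card (colour_vectors r n) = r ^ n"
  using bij_betw_same_card[OF bij_betw_restrict_colour_vectors] by (simp add: card_PiE)

lemma finite_colour_vectors: "r > 0 \<Longrightarrow> finite (colour_vectors r n)"
  using card_colour_vectors[of r n] by (metis card_gt_0_iff zero_less_power)

lemma one_in_W: "r > 0 \<Longrightarrow> (id, \<lambda>_. 0) \<in> W r n"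
  by (simp add: W_def permutes_id)

lemma finite_W: "r > 0 \<Longrightarrow> finite (W r n)"
  by (simp add: W_eq finite_colour_vectors finite_permutations)

lemma sum_colour_vectors_prod:
  assumes "r > 0"
  shows "(\<Sum>z\<in>colour_vectors r n. \<Prod>i<n. f i (z i)) = (\<Prod>i<n. \<Sum>c<r. f i c :: 'a :: comm_semiring_1)"
proof -
  have "(\<Sum>z\<in>colour_vectors r n. \<Prod>i<n. f i (z i))
      = (\<Sum>z\<in>colour_vectors r n. \<Prod>i<n. f i (restrict z {..<n} i))"
    by simp
  also have "\<dots> = (\<Sum>g\<in>{..<n} \<rightarrow>\<^sub>E {..<r}. \<Prod>i<n. f i (g i))"
    by (rule sum.reindex_bij_betw[OF bij_betw_restrict_colour_vectors[OF assms]])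
  also have "\<dots> = (\<Prod>i<n. \<Sum>c<r. f i c)"
    by (rule prod_sum_PiE[symmetric]) auto
  finally show ?thesis .
qed

lemma sum_colour_vectors_xi_power:
  assumes "r > 0"
  shows "(\<Sum>z\<in>colour_vectors r n. xi r ^ (\<Sum>i<n. a i * z i))
       = (if \<forall>i<n. r dvd a i then of_nat r ^ n else 0)"
proof -
  have "(\<Sum>z\<in>colour_vectors r n. xi r ^ (\<Sum>i<n. a i * z i))
      = (\<Sum>z\<in>colour_vectors r n. \<Prod>i<n. (xi r ^ a i) ^ z i)"
    by (simp add: power_sum power_mult)
  also have "\<dots> = (\<Prod>i<n. \<Sum>c<r. (xi r ^ a i) ^ c)"
    by (rule sum_colour_vectors_prod[OF assms])
  also have "\<dots> = (\<Prod>i<n. if r dvd a i then of_nat r else 0)"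
    using assms by (simp add: sum_powers_root_of_unity xi_power_power_r xi_power_eq_1_iff)
  also have "\<dots> = (if \<forall>i<n. r dvd a i then of_nat r ^ n else 0)"
    by (auto simp: prod_zero_iff)
  finally show ?thesis .
qed

lemma wmult_left_cancel:
  assumes "h \<in> W r n" "g1 \<in> W r n" "g2 \<in> W r n" and eq: "wmult r h g1 = wmult r h g2"
  shows "g1 = g2"
proof -
  obtain \<tau> y \<sigma>1 x1 \<sigma>2 x2 where h: "h = (\<tau>, y)" and g: "g1 = (\<sigma>1, x1)" "g2 = (\<sigma>2, x2)"
    by (cases h, cases g1, cases g2)
  have \<tau>: "\<tau> permutes {..<n}" and x: "\<And>i. x1 i < r" "\<And>i. x2 i < r"
    using assms h g by (auto simp: W_def)
  have "\<sigma>1 \<circ> \<tau> = \<sigma>2 \<circ> \<tau>" and colours: "\<And>i. [y i + x1 (\<tau> i) = y i + x2 (\<tau> i)] (mod r)"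
    using eq h g by (simp_all add: wmult_def fun_eq_iff cong_def)
  then have "\<sigma>1 = \<sigma>2"
    using \<tau> by (metis permutes_surj surj_fun_eq)
  moreover have "x1 = x2"
  proof
    fix i
    have "[x1 i = x2 i] (mod r)"
      using colours[of "inv \<tau> i"] by (simp add: permutes_inverses[OF \<tau>] cong_add_lcancel_nat)
    then show "x1 i = x2 i"
      using x by (simp add: cong_def)
  qed
  ultimately show ?thesis
    using g by simp
qed

lemma ex_conjugate:
  assumes "r > 0" "h \<in> W r n" "c \<in> W r n"
  shows "\<exists>g\<in>W r n. wmult r h g = wmult r c h"
proof -
  obtain \<tau> y \<rho> z where h: "h = (\<tau>, y)" and c: "c = (\<rho>, z)"
    by (cases h, cases c)
  have \<tau>: "\<tau> permutes {..<n}" and \<rho>: "\<rho> permutes {..<n}"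
    and y: "\<And>i. y i < r" "\<And>i. i \<ge> n \<Longrightarrow> y i = 0" and z: "\<And>i. i \<ge> n \<Longrightarrow> z i = 0"
    using assms(2,3) h c by (auto simp: W_def)
  \<comment> \<open>\<open>h\<inverse> c h\<close> in coordinates\<close>
  define g where "g = (\<tau> \<circ> \<rho> \<circ> inv \<tau>,
      \<lambda>j. (z (inv \<tau> j) + y (\<rho> (inv \<tau> j)) + (r - y (inv \<tau> j))) mod r)"
  have "\<tau> \<circ> \<rho> \<circ> inv \<tau> permutes {..<n}"
    by (intro permutes_compose permutes_inv \<tau> \<rho>)
  moreover have "inv \<tau> j = j" "\<rho> j = j" if "j \<ge> n" for j
    using that permutes_not_in[OF permutes_inv[OF \<tau>]] permutes_not_in[OF \<rho>] by auto
  ultimately have "g \<in> W r n"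
    using assms(1) y z by (simp add: g_def W_def)
  moreover have "(y i + (z i + y (\<rho> i) + (r - y i)) mod r) mod r = (z i + y (\<rho> i)) mod r" for i
  proof -
    have "y i + (z i + y (\<rho> i) + (r - y i)) = z i + y (\<rho> i) + r"
      using y(1)[of i] by simp
    then show ?thesis
      by (metis mod_add_right_eq mod_add_self2)
  qed
  then have "wmult r h g = wmult r c h"
    by (simp add: h c g_def wmult_def fun_eq_iff permutes_inverses[OF \<tau>])
  ultimately show ?thesis
    by blast
qed

section \<open>The characters \<open>chi\<close> as traces\<close>

lemma sum_over_orbits:
  fixes x :: "'a \<Rightarrow> 'b :: semiring_0"
  assumes "\<sigma> permutes A" "finite A"
  shows "(\<Sum>i\<in>A. h (orbit \<sigma> i) * x i) = (\<Sum>C\<in>orbit \<sigma> ` A. h C * (\<Sum>j\<in>C. x j))"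
proof -
  have perm: "permutation \<sigma>"
    using assms permutation_permutes by blast
  have same_orbit: "orbit \<sigma> j = orbit \<sigma> i" if "j \<in> orbit \<sigma> i" for i j
    using orbit_cyclic_eq3[OF cyclic_on_orbit'[OF perm] that] .
  have block: "{j \<in> A. orbit \<sigma> j = C} = C" if "C \<in> orbit \<sigma> ` A" for C
    using that permutes_orbit_subset[OF assms(1)] permutation_self_in_orbit[OF perm] same_orbit
    by blast
  have "(\<Sum>i\<in>A. h (orbit \<sigma> i) * x i) = (\<Sum>C\<in>orbit \<sigma> ` A. \<Sum>j\<in>{j \<in> A. orbit \<sigma> j = C}. h (orbit \<sigma> j) * x j)"
    by (rule sum.image_gen[OF assms(2)])
  also have "\<dots> = (\<Sum>C\<in>orbit \<sigma> ` A. \<Sum>j\<in>C. h C * x j)"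
  proof (rule sum.cong[OF refl])
    fix C assume C: "C \<in> orbit \<sigma> ` A"
    then obtain i where "C = orbit \<sigma> i"
      by blast
    then show "(\<Sum>j\<in>{j \<in> A. orbit \<sigma> j = C}. h (orbit \<sigma> j) * x j) = (\<Sum>j\<in>C. h C * x j)"
      unfolding block[OF C] by (simp add: same_orbit)
  qed
  finally show ?thesis
    by (simp only: sum_distrib_left)
qed

lemma ell_eq:
  assumes "\<sigma> permutes {..<n}"
  shows "ell r n (\<sigma>, x) = card {C \<in> orbit \<sigma> ` {..<n}. r dvd (\<Sum>j\<in>C. x j)}"
proof -
  have "permutation \<sigma>"
    using assms permutation_permutes by blast
  then have "{y. \<exists>m. y = (\<sigma> ^^ m) i} = orbit \<sigma> i" for i
    by (simp add: orbit_altdef_permutation)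
  then show ?thesis
    by (simp add: ell_def dvd_eq_mod_eq_0)
qed

text \<open>The trace of \<open>(\<sigma>, x)\<close> on \<open>V\<^sup>\<otimes>\<^sup>n\<close>, for the basis \<open>{0..r*m}\<close> of \<open>V\<close> in which \<open>b\<close> has
  colour \<open>b mod r\<close>. Grouping the fixed basis tensors by the cycles of \<open>\<sigma>\<close>, a cycle of colour \<open>0\<close>
  contributes a factor \<open>r * m + 1\<close> and any other cycle a geometric sum equal to \<open>1\<close>.\<close>
lemma chi_eq_sum_invariant_maps:
  assumes "r > 0" "\<sigma> permutes {..<n}"
  shows "chi r n m (\<sigma>, x)
       = (\<Sum>F\<in>invariant_maps {..<n} (\<lambda>_. {..r * m}) \<sigma>. xi r ^ (\<Sum>i<n. F i * x i))"
proof -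
  define Orbs where "Orbs = orbit \<sigma> ` {..<n}"
  define s where "s C = (\<Sum>j\<in>C. x j)" for C
  have "(\<Sum>F\<in>invariant_maps {..<n} (\<lambda>_. {..r * m}) \<sigma>. xi r ^ (\<Sum>i<n. F i * x i))
      = (\<Sum>g\<in>Orbs \<rightarrow>\<^sub>E {..r * m}. xi r ^ (\<Sum>i<n. restrict (\<lambda>i. g (orbit \<sigma> i)) {..<n} i * x i))"
    unfolding Orbs_def
    by (rule sum.reindex_bij_betw[OF bij_betw_orbit_maps_invariant_maps[OF assms(2)], symmetric]) simp
  also have "\<dots> = (\<Sum>g\<in>Orbs \<rightarrow>\<^sub>E {..r * m}. xi r ^ (\<Sum>i<n. g (orbit \<sigma> i) * x i))"
    by simp
  also have "\<dots> = (\<Sum>g\<in>Orbs \<rightarrow>\<^sub>E {..r * m}. \<Prod>C\<in>Orbs. (xi r ^ s C) ^ g C)"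
  proof (rule sum.cong[OF refl])
    fix g :: "nat set \<Rightarrow> nat"
    have "(\<Sum>i<n. g (orbit \<sigma> i) * x i) = (\<Sum>C\<in>Orbs. g C * s C)"
      unfolding Orbs_def s_def by (rule sum_over_orbits[OF assms(2) finite_lessThan])
    then show "xi r ^ (\<Sum>i<n. g (orbit \<sigma> i) * x i) = (\<Prod>C\<in>Orbs. (xi r ^ s C) ^ g C)"
      by (simp add: power_sum mult.commute flip: power_mult)
  qed
  also have "\<dots> = (\<Prod>C\<in>Orbs. \<Sum>b\<le>r * m. (xi r ^ s C) ^ b)"
    by (rule prod_sum_PiE[symmetric]) (simp_all add: Orbs_def)
  also have "\<dots> = (\<Prod>C\<in>Orbs. if r dvd s C then of_nat (r * m) + 1 else 1)"
    using assms(1) by (simp add: sum_powers_atMost_root_of_unity xi_power_power_r xi_power_eq_1_iff)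
  also have "\<dots> = (of_nat (r * m) + 1) ^ card {C \<in> Orbs. r dvd s C}"
    by (simp add: prod.If_cases Orbs_def Int_def)
  finally show ?thesis
    by (simp add: chi_def ell_eq[OF assms(2)] Orbs_def s_def add.commute)
qed

lemma bij_betw_invariant_maps_conjugate:
  assumes "\<tau> permutes A" "\<rho> permutes A" "\<sigma> \<circ> \<tau> = \<tau> \<circ> \<rho>"
  shows "bij_betw (\<lambda>F. restrict (F \<circ> \<tau>) A) (invariant_maps A (\<lambda>_. B) \<sigma>) (invariant_maps A (\<lambda>_. B) \<rho>)"
proof (rule bij_betw_byWitness[where f' = "\<lambda>G. restrict (G \<circ> inv \<tau>) A"])
  have \<sigma>\<tau>: "\<sigma> (\<tau> i) = \<tau> (\<rho> i)" for i
    using fun_cong[OF assms(3), of i] by simp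
  then have \<sigma>: "\<sigma> i = \<tau> (\<rho> (inv \<tau> i))" for i
    by (metis permutes_inverses(1)[OF assms(1)])
  have A: "\<tau> i \<in> A" "inv \<tau> i \<in> A" "\<rho> i \<in> A" if "i \<in> A" for i
    using that permutes_in_image[OF assms(1)] permutes_in_image[OF permutes_inv[OF assms(1)]]
      permutes_in_image[OF assms(2)] by auto
  show "\<forall>F\<in>invariant_maps A (\<lambda>_. B) \<sigma>. restrict (restrict (F \<circ> \<tau>) A \<circ> inv \<tau>) A = F"
    using A by (auto simp: invariant_maps_def fun_eq_iff PiE_def extensional_def
                           permutes_inverses[OF assms(1)])
  show "\<forall>G\<in>invariant_maps A (\<lambda>_. B) \<rho>. restrict (restrict (G \<circ> inv \<tau>) A \<circ> \<tau>) A = G"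
    using A by (auto simp: invariant_maps_def fun_eq_iff PiE_def extensional_def
                           permutes_inverses[OF assms(1)])
  show "(\<lambda>F. restrict (F \<circ> \<tau>) A) ` invariant_maps A (\<lambda>_. B) \<sigma> \<subseteq> invariant_maps A (\<lambda>_. B) \<rho>"
  proof
    fix G assume "G \<in> (\<lambda>F. restrict (F \<circ> \<tau>) A) ` invariant_maps A (\<lambda>_. B) \<sigma>"
    then obtain F where F: "F \<in> invariant_maps A (\<lambda>_. B) \<sigma>" and G: "G = restrict (F \<circ> \<tau>) A"
      by blast
    have "F (\<tau> (\<rho> i)) = F (\<tau> i)" if "i \<in> A" for i
      using F A(1)[OF that] by (simp add: invariant_maps_def flip: \<sigma>\<tau>)
    then show "G \<in> invariant_maps A (\<lambda>_. B) \<rho>"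
      using F A by (auto simp: G invariant_maps_def)
  qed
  show "(\<lambda>G. restrict (G \<circ> inv \<tau>) A) ` invariant_maps A (\<lambda>_. B) \<rho> \<subseteq> invariant_maps A (\<lambda>_. B) \<sigma>"
    using A by (auto simp: invariant_maps_def \<sigma> permutes_inverses[OF assms(1)])
qed

lemma sum_colours_conjugate_cong:
  fixes F x y z :: "nat \<Rightarrow> nat"
  assumes "\<tau> permutes {..<n}" "\<rho> permutes {..<n}" "\<sigma> \<circ> \<tau> = \<tau> \<circ> \<rho>"
    and colours: "\<And>i. [y i + x (\<tau> i) = z i + y (\<rho> i)] (mod r)"
    and invariant: "\<And>i. i < n \<Longrightarrow> F (\<sigma> i) = F i"
  shows "[(\<Sum>i<n. F i * x i) = (\<Sum>i<n. F (\<tau> i) * z i)] (mod r)"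
proof -
  have "F (\<tau> (\<rho> i)) = F (\<tau> i)" if "i < n" for i
    using invariant[of "\<tau> i"] fun_cong[OF assms(3), of i] permutes_in_image[OF assms(1)] that by simp
  then have "(\<Sum>i<n. F (\<tau> i) * y (\<rho> i)) = (\<Sum>i<n. F (\<tau> (\<rho> i)) * y (\<rho> i))"
    by simp
  also have "\<dots> = (\<Sum>i<n. F (\<tau> i) * y i)"
    using sum.permute[OF assms(2), of "\<lambda>i. F (\<tau> i) * y i"] by (simp add: comp_def)
  finally have y_shift: "(\<Sum>i<n. F (\<tau> i) * y (\<rho> i)) = (\<Sum>i<n. F (\<tau> i) * y i)" .
  have "[(\<Sum>i<n. F (\<tau> i) * (y i + x (\<tau> i))) = (\<Sum>i<n. F (\<tau> i) * (z i + y (\<rho> i)))] (mod r)"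
    by (intro cong_sum cong_mult cong_refl colours)
  then have "[(\<Sum>i<n. F (\<tau> i) * x (\<tau> i)) + (\<Sum>i<n. F (\<tau> i) * y i)
            = (\<Sum>i<n. F (\<tau> i) * z i) + (\<Sum>i<n. F (\<tau> i) * y i)] (mod r)"
    by (simp add: distrib_left sum.distrib y_shift add.commute)
  then have "[(\<Sum>i<n. F (\<tau> i) * x (\<tau> i)) = (\<Sum>i<n. F (\<tau> i) * z i)] (mod r)"
    by (simp only: cong_add_rcancel_nat)
  moreover have "(\<Sum>i<n. F (\<tau> i) * x (\<tau> i)) = (\<Sum>i<n. F i * x i)"
    using sum.permute[OF assms(1), of "\<lambda>i. F i * x i"] by (simp add: comp_def)
  ultimately show ?thesis
    by simp
qed

lemma chi_conjugate:
  assumes "r > 0" "g \<in> W r n" "h \<in> W r n" "c \<in> W r n" and conj: "wmult r h g = wmult r c h"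
  shows "chi r n m g = chi r n m c"
proof -
  obtain \<sigma> x \<tau> y \<rho> z where g: "g = (\<sigma>, x)" and h: "h = (\<tau>, y)" and c: "c = (\<rho>, z)"
    by (cases g, cases h, cases c)
  have \<sigma>: "\<sigma> permutes {..<n}" and \<tau>: "\<tau> permutes {..<n}" and \<rho>: "\<rho> permutes {..<n}"
    using assms(2-4) g h c by (auto simp: W_def)
  have perms: "\<sigma> \<circ> \<tau> = \<tau> \<circ> \<rho>" and colours: "\<And>i. [y i + x (\<tau> i) = z i + y (\<rho> i)] (mod r)"
    using conj g h c by (simp_all add: wmult_def fun_eq_iff cong_def)
  let ?B = "{..r * m}"
  have exponent: "xi r ^ (\<Sum>i<n. restrict (F \<circ> \<tau>) {..<n} i * z i) = xi r ^ (\<Sum>i<n. F i * x i)"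
    if "F \<in> invariant_maps {..<n} (\<lambda>_. ?B) \<sigma>" for F
  proof -
    have "[(\<Sum>i<n. F i * x i) = (\<Sum>i<n. F (\<tau> i) * z i)] (mod r)"
      using that by (intro sum_colours_conjugate_cong[OF \<tau> \<rho> perms colours]) (simp add: invariant_maps_def)
    then show ?thesis
      using xi_power_cong[OF assms(1)] by (simp add: cong_sym)
  qed
  have "chi r n m c = (\<Sum>G\<in>invariant_maps {..<n} (\<lambda>_. ?B) \<rho>. xi r ^ (\<Sum>i<n. G i * z i))"
    using chi_eq_sum_invariant_maps[OF assms(1) \<rho>] c by simp
  also have "\<dots> = (\<Sum>F\<in>invariant_maps {..<n} (\<lambda>_. ?B) \<sigma>. xi r ^ (\<Sum>i<n. restrict (F \<circ> \<tau>) {..<n} i * z i))"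
    by (rule sum.reindex_bij_betw[OF bij_betw_invariant_maps_conjugate[OF \<tau> \<rho> perms], symmetric])
  also have "\<dots> = chi r n m g"
    using chi_eq_sum_invariant_maps[OF assms(1) \<sigma>] g exponent by simp
  finally show ?thesis ..
qed

section \<open>Induced characters\<close>

definition induced :: "nat \<Rightarrow> nat \<Rightarrow> colperm set \<Rightarrow> (colperm \<Rightarrow> complex) \<Rightarrow> colperm \<Rightarrow> complex" where
  "induced r n H \<psi> g =
     (\<Sum>h\<in>W r n. \<Sum>c\<in>H. if wmult r h g = wmult r c h then \<psi> c else 0) / of_nat (card H)"

lemma chi_lambda_eq_induced: "chi_lambda r n k = induced r n (Hsub r n k) (psi r n k)"
  by (simp add: fun_eq_iff chi_lambda_def induced_def)

lemma sum_if_conjugate: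
  assumes "r > 0" "h \<in> W r n" "c \<in> W r n"
    and conj_invariant: "\<And>g. g \<in> W r n \<Longrightarrow> wmult r h g = wmult r c h \<Longrightarrow> f g = f c"
  shows "(\<Sum>g\<in>W r n. if wmult r h g = wmult r c h then f g * a else 0) = f c * a"
proof -
  obtain g0 where g0: "g0 \<in> W r n" "wmult r h g0 = wmult r c h"
    using ex_conjugate[OF assms(1-3)] by blast
  have "wmult r h g = wmult r c h \<longleftrightarrow> g = g0" if "g \<in> W r n" for g
    using wmult_left_cancel[OF assms(2) that g0(1)] g0(2) by auto
  then have "(\<Sum>g\<in>W r n. if wmult r h g = wmult r c h then f g * a else 0)
      = (\<Sum>g\<in>W r n. if g = g0 then f g * a else 0)"
    by (intro sum.cong) auto
  also have "\<dots> = f c * a"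
    using g0 conj_invariant finite_W[OF assms(1)] by simp
  finally show ?thesis .
qed

lemma frobenius_reciprocity:
  assumes "r > 0" "H \<subseteq> W r n"
    and conj_invariant: "\<And>g h c. g \<in> W r n \<Longrightarrow> h \<in> W r n \<Longrightarrow> c \<in> W r n \<Longrightarrow>
                  wmult r h g = wmult r c h \<Longrightarrow> f g = f c"
  shows "inner r n f (induced r n H \<psi>) = (\<Sum>c\<in>H. f c * cnj (\<psi> c)) / of_nat (card H)"
proof -
  let ?W = "W r n"
  let ?t = "\<lambda>g h c. if wmult r h g = wmult r c h then f g * cnj (\<psi> c) else 0"
  have W_nonempty: "card ?W \<noteq> 0"
    using finite_W[OF assms(1)] one_in_W[OF assms(1)] by (auto simp: card_eq_0_iff)
  have "inner r n f (induced r n H \<psi>) = (\<Sum>g\<in>?W. \<Sum>h\<in>?W. \<Sum>c\<in>H.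
           f g * cnj (if wmult r h g = wmult r c h then \<psi> c else 0)) / of_nat (card H) / of_nat (card ?W)"
    by (simp add: inner_def induced_def cnj_sum sum_divide_distrib sum_distrib_left)
  also have "(\<Sum>g\<in>?W. \<Sum>h\<in>?W. \<Sum>c\<in>H. f g * cnj (if wmult r h g = wmult r c h then \<psi> c else 0))
      = (\<Sum>g\<in>?W. \<Sum>h\<in>?W. \<Sum>c\<in>H. ?t g h c)"
    by (intro sum.cong refl) simp
  also have "(\<Sum>g\<in>?W. \<Sum>h\<in>?W. \<Sum>c\<in>H. ?t g h c) = (\<Sum>h\<in>?W. \<Sum>c\<in>H. \<Sum>g\<in>?W. ?t g h c)"
    by (subst sum.swap) (simp add: sum.swap[of _ ?W H])
  also have "\<dots> = (\<Sum>h\<in>?W. \<Sum>c\<in>H. f c * cnj (\<psi> c))"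
    using assms(2) by (intro sum.cong refl sum_if_conjugate[OF assms(1)] conj_invariant) auto
  also have "\<dots> = of_nat (card ?W) * (\<Sum>c\<in>H. f c * cnj (\<psi> c))"
    by simp
  finally show ?thesis
    using W_nonempty by simp
qed

section \<open>Restriction to the Young subgroup\<close>

definition colour_class :: "nat \<Rightarrow> nat \<Rightarrow> nat \<Rightarrow> nat set" where
  "colour_class r m c = {b. b \<le> r * m \<and> b mod r = c}"

lemma card_colour_class:
  assumes "c < r"
  shows "card (colour_class r m c) = (if c = 0 then Suc m else m)"
proof -
  let ?I = "if c = 0 then {..m} else {..<m}"
  have "colour_class r m c = (\<lambda>a. r * a + c) ` ?I"
  proof (intro equalityI subsetI)
    fix b assume "b \<in> colour_class r m c"
    then have "b \<le> r * m" "b mod r = c"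
      by (simp_all add: colour_class_def)
    then have b: "b = r * (b div r) + c" "r * (b div r) + c \<le> r * m"
      using mult_div_mod_eq[of r b] by simp_all
    have "b div r \<in> ?I"
    proof (cases "c = 0")
      case False
      then have "r * (b div r) < r * m"
        using b(2) by linarith
      then show ?thesis
        using False by simp
    qed (use b(2) assms in simp)
    then show "b \<in> (\<lambda>a. r * a + c) ` ?I"
      using b(1) by blast
  next
    fix b assume "b \<in> (\<lambda>a. r * a + c) ` ?I"
    then obtain a where a: "a \<in> ?I" "b = r * a + c"
      by blast
    have "r * a + c \<le> r * m"
    proof (cases "c = 0")
      case False
      then have "Suc a \<le> m" using a(1) by simp
      then have "r * Suc a \<le> r * m" by (rule mult_le_mono2)
      then show ?thesis using assms by simp
    qed (use a(1) in simp)
    then show "b \<in> colour_class r m c"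
      using a(2) assms by (simp add: colour_class_def)
  qed
  moreover have "inj_on (\<lambda>a. r * a + c) ?I"
    using assms by (auto simp: inj_on_def)
  ultimately show ?thesis
    by (simp add: card_image)
qed

lemma invariant_maps_cong:
  "(\<And>i. i \<in> A \<Longrightarrow> S i = S' i) \<Longrightarrow> invariant_maps A S \<rho> = invariant_maps A S' \<rho>"
  by (simp add: invariant_maps_def cong: PiE_cong)

lemma Hsub_eq: "Hsub r n k = {\<rho>. \<rho> permutes {..<n} \<and> \<rho> ` {..<n - k} \<subseteq> {..<n - k}} \<times> colour_vectors r n"
  by (auto simp: Hsub_def W_eq)

lemma card_Hsub:
  assumes "r > 0" "k \<le> n"
  shows "card (Hsub r n k) = r ^ n * (fact (n - k) * fact k)"
proof -
  have "card {\<rho>. \<rho> permutes {..<n} \<and> \<rho> ` {..<n - k} \<subseteq> {..<n - k}}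
      = card ({\<rho>. \<rho> permutes {..<n - k}} \<times> {\<rho>. \<rho> permutes {n - k..<n}})"
  proof (rule bij_betw_same_card[symmetric])
    have "{..<n - k} \<union> {n - k..<n} = {..<n}" "{..<n - k} \<inter> {n - k..<n} = {}"
      by auto
    then show "bij_betw (\<lambda>(\<rho>1, \<rho>2). \<rho>1 \<circ> \<rho>2) ({\<rho>. \<rho> permutes {..<n - k}} \<times> {\<rho>. \<rho> permutes {n - k..<n}})
        {\<rho>. \<rho> permutes {..<n} \<and> \<rho> ` {..<n - k} \<subseteq> {..<n - k}}"
      using bij_betw_compose_permutes[OF finite_lessThan, of "n - k" "{n - k..<n}"] by simp
  qed
  also have "\<dots> = fact (n - k) * fact k"
    using assms(2) by (simp add: card_cartesian_product card_permutations)
  finally show ?thesis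
    using assms(1) by (simp add: Hsub_eq card_cartesian_product card_colour_vectors)
qed

lemma dvd_add_pred_iff:
  fixes b r :: nat
  assumes "r \<ge> 2"
  shows "r dvd (b + (r - 1)) \<longleftrightarrow> b mod r = 1"
proof -
  have "r dvd (b + (r - 1)) \<longleftrightarrow> [b + (r - 1) + 1 = 0 + 1] (mod r)"
    by (simp only: cong_add_rcancel_nat cong_0_iff)
  also have "b + (r - 1) + 1 = b + r"
    using assms by simp
  also have "[b + r = 0 + 1] (mod r) \<longleftrightarrow> b mod r = 1"
    using assms by (simp add: cong_def)
  finally show ?thesis .
qed

lemma cnj_psi:
  assumes "r > 0"
  shows "cnj (psi r n k (\<rho>, z)) = of_int (sign (\<lambda>i. if n - k \<le> i then \<rho> i else i))
           * xi r ^ (\<Sum>i<n. (if n - k \<le> i then r - 1 else 0) * z i)"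
proof -
  have "psi r n k (\<rho>, z) = of_int (sign (\<lambda>i. if n - k \<le> i then \<rho> i else i))
      * xi r ^ (\<Sum>i\<in>{n - k..<n}. z i)"
    by (simp add: psi_def xi_def cong: if_cong)
  then have "cnj (psi r n k (\<rho>, z)) = of_int (sign (\<lambda>i. if n - k \<le> i then \<rho> i else i))
      * xi r ^ ((r - 1) * (\<Sum>i\<in>{n - k..<n}. z i))"
    using assms by (simp add: cnj_xi_power del: complex_cnj_power)
  also have "(r - 1) * (\<Sum>i\<in>{n - k..<n}. z i) = (\<Sum>i\<in>{i \<in> {..<n}. n - k \<le> i}. (r - 1) * z i)"
    by (simp add: sum_distrib_left atLeastLessThan_def lessThan_def atLeast_def Collect_conj_eq Int_commute)
  also have "\<dots> = (\<Sum>i<n. if n - k \<le> i then (r - 1) * z i else 0)"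
    by (rule sum.inter_filter) simp
  also have "\<dots> = (\<Sum>i<n. (if n - k \<le> i then r - 1 else 0) * z i)"
    by (intro sum.cong) auto
  finally show ?thesis .
qed

lemma chi_mult_cnj_psi:
  assumes "r > 0" "\<rho> permutes {..<n}"
  shows "chi r n m (\<rho>, z) * cnj (psi r n k (\<rho>, z))
       = (\<Sum>F\<in>invariant_maps {..<n} (\<lambda>_. {..r * m}) \<rho>.
            of_int (sign (\<lambda>i. if n - k \<le> i then \<rho> i else i))
            * xi r ^ (\<Sum>i<n. (F i + (if n - k \<le> i then r - 1 else 0)) * z i))"
    (is "_ = (\<Sum>F\<in>?Inv. ?sg * xi r ^ (\<Sum>i<n. (F i + ?e i) * z i))")
proof -
  have "chi r n m (\<rho>, z) * cnj (psi r n k (\<rho>, z))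
      = (\<Sum>F\<in>?Inv. xi r ^ (\<Sum>i<n. F i * z i)) * (?sg * xi r ^ (\<Sum>i<n. ?e i * z i))"
    by (simp add: chi_eq_sum_invariant_maps[OF assms] cnj_psi[OF assms(1)])
  also have "\<dots> = (\<Sum>F\<in>?Inv. ?sg * (xi r ^ (\<Sum>i<n. F i * z i) * xi r ^ (\<Sum>i<n. ?e i * z i)))"
    unfolding sum_distrib_right by (simp add: mult_ac)
  also have "\<dots> = (\<Sum>F\<in>?Inv. ?sg * xi r ^ (\<Sum>i<n. (F i + ?e i) * z i))"
    by (simp add: distrib_right sum.distrib power_add)
  finally show ?thesis .
qed

lemma sum_colour_vectors_chi_cnj_psi:
  assumes "r \<ge> 2" "\<rho> permutes {..<n}"
  shows "(\<Sum>z\<in>colour_vectors r n. chi r n m (\<rho>, z) * cnj (psi r n k (\<rho>, z)))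
       = of_int (sign (\<lambda>i. if n - k \<le> i then \<rho> i else i)) * of_nat r ^ n
         * of_nat (card (invariant_maps {..<n}
                          (\<lambda>i. if i < n - k then colour_class r m 0 else colour_class r m 1) \<rho>))"
proof -
  define sg where "sg = (of_int (sign (\<lambda>i. if n - k \<le> i then \<rho> i else i)) :: complex)"
  define e where "e i = (if n - k \<le> i then r - 1 else 0)" for i
  let ?Inv = "invariant_maps {..<n} (\<lambda>_. {..r * m}) \<rho>"
  have r: "r > 0"
    using assms(1) by simp
  have fin: "finite ?Inv"
    using invariant_maps_subset_PiE by (rule finite_subset) (simp add: finite_PiE)
  have dvd_iff: "r dvd (b + e i) \<longleftrightarrow> b mod r = (if i < n - k then 0 else 1)" for b i
    using dvd_add_pred_iff[OF assms(1)] by (simp add: e_def dvd_eq_mod_eq_0)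
  have "(\<Sum>z\<in>colour_vectors r n. chi r n m (\<rho>, z) * cnj (psi r n k (\<rho>, z)))
      = (\<Sum>F\<in>?Inv. sg * (\<Sum>z\<in>colour_vectors r n. xi r ^ (\<Sum>i<n. (F i + e i) * z i)))"
    by (simp add: chi_mult_cnj_psi[OF r assms(2)] sum_distrib_left sum.swap[of _ "colour_vectors r n"]
                  sg_def e_def)
  also have "\<dots> = sg * (\<Sum>F\<in>?Inv. if \<forall>i<n. r dvd (F i + e i) then of_nat r ^ n else 0)"
    by (simp add: sum_colour_vectors_xi_power[OF r] sum_distrib_left)
  also have "(\<Sum>F\<in>?Inv. if \<forall>i<n. r dvd (F i + e i) then of_nat r ^ n else 0)
      = (\<Sum>F\<in>{F \<in> ?Inv. \<forall>i<n. r dvd (F i + e i)}. of_nat r ^ n :: complex)"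
    by (rule sum.inter_filter[OF fin, symmetric])
  also have "sg * \<dots> = sg * of_nat r ^ n * of_nat (card {F \<in> ?Inv. \<forall>i<n. r dvd (F i + e i)})"
    by simp
  also have "{F \<in> ?Inv. \<forall>i<n. r dvd (F i + e i)}
      = invariant_maps {..<n} (\<lambda>i. if i < n - k then colour_class r m 0 else colour_class r m 1) \<rho>"
    by (auto simp: invariant_maps_def PiE_iff colour_class_def dvd_iff)
  finally show ?thesis
    by (simp add: sg_def)
qed

lemma sign_block_compose:
  fixes \<rho>1 \<rho>2 :: "nat \<Rightarrow> nat"
  assumes "\<rho>1 permutes {..<p}" "\<rho>2 permutes {p..<n}"
  shows "(\<lambda>i. if p \<le> i then (\<rho>1 \<circ> \<rho>2) i else i) = \<rho>2"
proof
  fix i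
  show "(if p \<le> i then (\<rho>1 \<circ> \<rho>2) i else i) = \<rho>2 i"
  proof (cases "p \<le> i")
    case True
    have "\<rho>2 i \<notin> {..<p}"
    proof (cases "i < n")
      case False
      then show ?thesis
        using True permutes_not_in[OF assms(2), of i] by simp
    qed (use True permutes_in_image[OF assms(2), of i] in simp)
    then show ?thesis
      using True permutes_not_in[OF assms(1)] by simp
  qed (use permutes_not_in[OF assms(2), of i] in simp)
qed

lemma card_invariant_maps_blocks:
  fixes \<rho>1 \<rho>2 :: "nat \<Rightarrow> nat"
  assumes "p \<le> n" "\<rho>1 permutes {..<p}" "\<rho>2 permutes {p..<n}"
  shows "card (invariant_maps {..<n} (\<lambda>i. if i < p then S0 else S1) (\<rho>1 \<circ> \<rho>2))
       = card (invariant_maps {..<p} (\<lambda>_. S0) \<rho>1) * card (invariant_maps {p..<n} (\<lambda>_. S1) \<rho>2)"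
proof -
  let ?S = "\<lambda>i. if i < p then S0 else S1"
  have "{..<p} \<union> {p..<n} = {..<n}" "{..<p} \<inter> {p..<n} = {}"
    using assms(1) by auto
  then have "card (invariant_maps {..<n} ?S (\<rho>1 \<circ> \<rho>2))
      = card (invariant_maps {..<p} ?S \<rho>1) * card (invariant_maps {p..<n} ?S \<rho>2)"
    using card_invariant_maps_compose[of "{..<p}" "{p..<n}" \<rho>1 \<rho>2 ?S] assms(2,3) by simp
  also have "invariant_maps {..<p} ?S \<rho>1 = invariant_maps {..<p} (\<lambda>_. S0) \<rho>1"
    by (rule invariant_maps_cong) simp
  also have "invariant_maps {p..<n} ?S \<rho>2 = invariant_maps {p..<n} (\<lambda>_. S1) \<rho>2"
    by (rule invariant_maps_cong) simp
  finally show ?thesis .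
qed

lemma sum_Hsub_chi_cnj_psi:
  assumes "r \<ge> 2" "k \<le> n"
  shows "(\<Sum>c\<in>Hsub r n k. chi r n m c * cnj (psi r n k c))
       = of_nat r ^ n * ((\<Prod>t<n - k. of_nat (Suc m) + of_nat t) * (\<Prod>t<k. of_nat m - of_nat t))"
proof -
  define p where "p = n - k"
  let ?S = "\<lambda>i. if i < p then colour_class r m 0 else colour_class r m 1"
  let ?P1 = "{\<rho>. \<rho> permutes {..<p}}" and ?P2 = "{\<rho>. \<rho> permutes {p..<n}}"
  let ?H = "{\<rho>. \<rho> permutes {..<n} \<and> \<rho> ` {..<p} \<subseteq> {..<p}}"
  let ?c1 = "\<lambda>\<rho>. of_nat (card (invariant_maps {..<p} (\<lambda>_. colour_class r m 0) \<rho>)) :: complex"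
  let ?c2 = "\<lambda>\<rho>. of_int (sign \<rho>) * of_nat (card (invariant_maps {p..<n} (\<lambda>_. colour_class r m 1) \<rho>)) :: complex"
  let ?term = "\<lambda>\<rho>. of_int (sign (\<lambda>i. if p \<le> i then \<rho> i else i)) * of_nat r ^ n
                  * of_nat (card (invariant_maps {..<n} ?S \<rho>)) :: complex"
  have pn: "p \<le> n"
    by (simp add: p_def)
  have "{..<p} \<union> {p..<n} = {..<n}" "{..<p} \<inter> {p..<n} = {}"
    using pn by auto
  then have bij: "bij_betw (\<lambda>(\<rho>1, \<rho>2). \<rho>1 \<circ> \<rho>2) (?P1 \<times> ?P2) ?H"
    using bij_betw_compose_permutes[OF finite_lessThan, of p "{p..<n}"] by simp
  have "(\<Sum>c\<in>Hsub r n k. chi r n m c * cnj (psi r n k c))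
      = (\<Sum>\<rho>\<in>?H. \<Sum>z\<in>colour_vectors r n. chi r n m (\<rho>, z) * cnj (psi r n k (\<rho>, z)))"
    by (simp add: Hsub_eq p_def sum.cartesian_product)
  also have "\<dots> = (\<Sum>\<rho>\<in>?H. ?term \<rho>)"
    using assms(1) by (intro sum.cong refl) (simp add: sum_colour_vectors_chi_cnj_psi p_def)
  also have "\<dots> = (\<Sum>x\<in>?P1 \<times> ?P2. ?term ((\<lambda>(\<rho>1, \<rho>2). \<rho>1 \<circ> \<rho>2) x))"
    by (rule sum.reindex_bij_betw[OF bij, symmetric])
  also have "\<dots> = (\<Sum>(\<rho>1, \<rho>2)\<in>?P1 \<times> ?P2. of_nat r ^ n * (?c1 \<rho>1 * ?c2 \<rho>2))"
  proof (rule sum.cong[OF refl])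
    fix x assume "x \<in> ?P1 \<times> ?P2"
    then obtain \<rho>1 \<rho>2 where x: "x = (\<rho>1, \<rho>2)" and \<rho>: "\<rho>1 permutes {..<p}" "\<rho>2 permutes {p..<n}"
      by blast
    show "?term ((\<lambda>(\<rho>1, \<rho>2). \<rho>1 \<circ> \<rho>2) x) = (case x of (\<rho>1, \<rho>2) \<Rightarrow> of_nat r ^ n * (?c1 \<rho>1 * ?c2 \<rho>2))"
      unfolding x prod.case sign_block_compose[OF \<rho>] card_invariant_maps_blocks[OF pn \<rho>]
      by (simp add: mult_ac)
  qed
  also have "\<dots> = (\<Sum>\<rho>1\<in>?P1. \<Sum>\<rho>2\<in>?P2. of_nat r ^ n * (?c1 \<rho>1 * ?c2 \<rho>2))"
    by (rule sum.cartesian_product[symmetric])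
  also have "\<dots> = of_nat r ^ n * ((\<Sum>\<rho>1\<in>?P1. ?c1 \<rho>1) * (\<Sum>\<rho>2\<in>?P2. ?c2 \<rho>2))"
    unfolding sum_product unfolding sum_distrib_left ..
  also have "(\<Sum>\<rho>1\<in>?P1. ?c1 \<rho>1) = (\<Prod>t<n - k. of_nat (Suc m) + of_nat t)"
    using sum_card_invariant_maps[of "{..<p}" "colour_class r m 0"] card_colour_class[of 0 r m] assms(1)
    by (simp add: p_def)
  also have "(\<Sum>\<rho>2\<in>?P2. ?c2 \<rho>2) = (\<Prod>t<k. of_nat m - of_nat t)"
    using sum_sign_card_invariant_maps[of "{p..<n}" "colour_class r m 1"] card_colour_class[of 1 r m] assms
    by (simp add: p_def)
  finally show ?thesis .
qed

lemma inner_chi_chi_lambda: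
  assumes "r \<ge> 2" "k \<le> n"
  shows "inner r n (chi r n m) (chi_lambda r n k) = of_nat (m + (n - k) choose (n - k)) * of_nat (m choose k)"
proof -
  have r: "r > 0"
    using assms(1) by simp
  have "inner r n (chi r n m) (chi_lambda r n k)
      = (\<Sum>c\<in>Hsub r n k. chi r n m c * cnj (psi r n k c)) / of_nat (card (Hsub r n k))"
    unfolding chi_lambda_eq_induced
    by (rule frobenius_reciprocity[OF r]) (auto simp: Hsub_def intro: chi_conjugate[OF r])
  also have "\<dots> = (of_nat r ^ n * ((\<Prod>t<n - k. of_nat (Suc m) + of_nat t) * (\<Prod>t<k. of_nat m - of_nat t)))
                    / (of_nat r ^ n * (fact (n - k) * fact k))"
    using r assms by (simp add: sum_Hsub_chi_cnj_psi card_Hsub)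
  also have "\<dots> = ((\<Prod>t<n - k. of_nat (Suc m) + of_nat t) / fact (n - k)) * ((\<Prod>t<k. of_nat m - of_nat t) / fact k)"
    using r by simp
  also have "\<dots> = of_nat (m + (n - k) choose (n - k)) * of_nat (m choose k)"
    by (simp only: prod_rising_div_fact prod_falling_div_fact)
  finally show ?thesis .
qed

section \<open>Orthogonality of Foulkes characters\<close>

lemma inner_cong: "(\<And>w. w \<in> W r n \<Longrightarrow> f w = g w) \<Longrightarrow> inner r n f \<beta> = inner r n g \<beta>"
  by (simp add: inner_def)

lemma inner_sum_left:
  "inner r n (\<lambda>w. \<Sum>j\<in>J. a j * f j w) \<beta> = (\<Sum>j\<in>J. a j * inner r n (f j) \<beta>)"
  by (simp add: inner_def sum_distrib_left sum_distrib_right sum_divide_distrib mult.assoc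
           sum.swap[of _ "W r n" J])

lemma inner_foulkes_chi_lambda:
  assumes "r \<ge> 2" "k \<le> n"
  shows "inner r n (foulkes r n j) (chi_lambda r n k) = (if j = k then of_nat (n choose k) else 0)"
proof -
  have "foulkes r n j = (\<lambda>w. \<Sum>i\<le>j. ((-1) ^ i * of_nat (Suc n choose i)) * chi r n (j - i) w)"
    by (simp add: fun_eq_iff foulkes_def)
  then have "inner r n (foulkes r n j) (chi_lambda r n k)
      = (\<Sum>i\<le>j. (-1) ^ i * of_nat (Suc n choose i) * inner r n (chi r n (j - i)) (chi_lambda r n k))"
    by (simp add: inner_sum_left)
  also have "\<dots> = (\<Sum>i\<le>j. (-1) ^ i * of_nat (Suc n choose i) *
                      (of_nat (j - i + (n - k) choose (n - k)) * of_nat (j - i choose k)))"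
    using assms by (simp add: inner_chi_chi_lambda)
  also have "\<dots> = (if j = k then of_nat (n choose k) else 0)"
    by (rule alternating_choose_orthogonality[OF assms(2)])
  finally show ?thesis .
qed

theorem mainTheorem4:
  fixes r n k :: nat and \<phi> :: "colperm \<Rightarrow> complex" and c :: "nat \<Rightarrow> complex"
  assumes "r \<ge> 2" and "n \<ge> 1"
    and "\<forall>w\<in>W r n. \<forall>w'\<in>W r n. ell r n w = ell r n w' \<longrightarrow> \<phi> w = \<phi> w'"
    and "\<forall>w\<in>W r n. \<phi> w = (\<Sum>j\<le>n. c j * foulkes r n j w)"
    and "k \<le> n"
  shows "c k = inner r n \<phi> (chi_lambda r n k) / of_nat (n choose k)"
proof -
  have "inner r n \<phi> (chi_lambda r n k)
      = inner r n (\<lambda>w. \<Sum>j\<le>n. c j * foulkes r n j w) (chi_lambda r n k)"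
    using assms(4) by (intro inner_cong) blast
  also have "\<dots> = (\<Sum>j\<le>n. c j * inner r n (foulkes r n j) (chi_lambda r n k))"
    by (rule inner_sum_left)
  also have "\<dots> = (\<Sum>j\<le>n. if j = k then c k * of_nat (n choose k) else 0)"
    using assms(1,5) by (intro sum.cong) (simp_all add: inner_foulkes_chi_lambda)
  also have "\<dots> = c k * of_nat (n choose k)"
    using assms(5) by simp
  finally show ?thesis
    using assms(5) by simp
qed

end
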